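(* Fix real numbers $\lambda>0$, $\beta>0$, $\alpha>1$ and $T_{cl}>0$. Let $(N_k)_{k\ge1}$ be positive integers with $N_k\to\infty$, and let $m_k,c_k$ be positive integers with $m_kc_k=N_k$, $m_k\to\infty$ and $c_k\to\infty$. Define $$a_k=\frac{\lambda\beta\alpha m_k}{\alpha m_k-1},\qquad P_{b,k}=\frac{a_k^{c_k}/c_k!}{\sum_{j=0}^{c_k}a_k^{j}/j!},\qquad \mathbb{E}[T_{\text{sys},k}]=\frac{\beta\alpha m_k}{\alpha m_k-1}(1-P_{b,k})+T_{cl}\,P_{b,k}.$$ Then $\lim_{k\to\infty}\mathbb{E}[T_{\text{sys},k}]=\beta$.
   Context: Model: an edge system with $N$ workers is split into $c$ groups of $m$ workers ($N=mc$); jobs arrive as a Poisson process of rate $\lambda$, each job is replicated on the $m$ workers of a free group, and jobs finding all groups busy are blocked and sent to the cloud, where they take expected time $T_{cl}$. Worker service times are Pareto $\mathrm{Pareto}(\beta,\alpha)$ ($\Pr(X>x)=(\beta/x)^\alpha$ for $x\ge\beta$, $\alpha>1$), so the job-computing time (minimum of $m$ copies) has mean $\frac{\beta m\alpha}{m\alpha-1}$. The blocking probability is the Erlang B formula with $c$ servers and offered load $\lambda\frac{\beta m\alpha}{m\alpha-1}$, and the average system time is $(1-P_b)\mathbb{E}[T_{\text{job}}]+P_b T_{cl}$. *)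

theory Defs
  imports "HOL-Analysis.Analysis"
begin

definition offered_load :: "real \<Rightarrow> real \<Rightarrow> real \<Rightarrow> nat \<Rightarrow> real" where
  "offered_load lam beta alpha m = lam * beta * alpha * real m / (alpha * real m - 1)"

definition erlang_B :: "nat \<Rightarrow> real \<Rightarrow> real" where
  "erlang_B c a = (a ^ c / fact c) / (\<Sum>j = 0..c. a ^ j / fact j)"

definition avg_sys_time :: "real \<Rightarrow> real \<Rightarrow> real \<Rightarrow> real \<Rightarrow> nat \<Rightarrow> nat \<Rightarrow> real" where
  "avg_sys_time lam beta alpha Tcl m c =
     (let Pb = erlang_B c (offered_load lam beta alpha m) in
      beta * alpha * real m / (alpha * real m - 1) * (1 - Pb) + Tcl * Pb)"

end

theory Submission
  imports Defs
begin

text \<open>The mean job-computing time \<open>\<beta>\<alpha>m/(\<alpha>m - 1)\<close> tends to \<open>\<beta>\<close> as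
  \<open>m \<rightarrow> \<infinity>\<close> and is bounded by \<open>\<beta>\<alpha>/(\<alpha> - 1)\<close>, so the offered loads stay in a
  fixed interval \<open>[0, A]\<close>. The Erlang B probability is at most its numerator
  \<open>a\<^sup>c/c!\<close>, because the denominator contains the term \<open>1\<close>; hence it is at most
  \<open>A\<^sup>c/c!\<close>, which vanishes as \<open>c \<rightarrow> \<infinity>\<close>.\<close>

definition mean_job_time :: "real \<Rightarrow> real \<Rightarrow> nat \<Rightarrow> real" where
  "mean_job_time beta alpha m = beta * alpha * real m / (alpha * real m - 1)"

lemma offered_load_eq: "offered_load lam beta alpha m = lam * mean_job_time beta alpha m"
  unfolding offered_load_def mean_job_time_def by simp

lemma avg_sys_time_eq:
  "avg_sys_time lam beta alpha Tcl m c =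
     mean_job_time beta alpha m * (1 - erlang_B c (offered_load lam beta alpha m))
     + Tcl * erlang_B c (offered_load lam beta alpha m)"
  unfolding avg_sys_time_def mean_job_time_def Let_def by simp

lemma mean_job_time_nonneg:
  assumes "beta \<ge> 0" and "alpha \<ge> 1" and "m > 0"
  shows "mean_job_time beta alpha m \<ge> 0"
proof -
  have "alpha * real m \<ge> 1 * 1"
    using assms(2,3) by (intro mult_mono) auto
  then show ?thesis
    unfolding mean_job_time_def using assms(1,2) by simp
qed

lemma mean_job_time_eq_inverse_form:
  assumes "m > 0"
  shows "mean_job_time beta alpha m = beta * alpha / (alpha - 1 / real m)"
  unfolding mean_job_time_def using assms by (simp add: field_simps)

lemma mean_job_time_le:
  assumes "beta \<ge> 0" and "alpha > 1" and "m > 0"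
  shows "mean_job_time beta alpha m \<le> beta * alpha / (alpha - 1)"
proof -
  have "1 / real m \<le> 1"
    using assms(3) by simp
  then have "beta * alpha / (alpha - 1 / real m) \<le> beta * alpha / (alpha - 1)"
    using assms(1,2) by (intro divide_left_mono mult_pos_pos) auto
  then show ?thesis
    using mean_job_time_eq_inverse_form[OF assms(3)] by simp
qed

lemma tendsto_mean_job_time:
  assumes "alpha \<noteq> 0" and "filterlim m at_top sequentially"
  shows "(\<lambda>k. mean_job_time beta alpha (m k)) \<longlonglongrightarrow> beta"
proof -
  have "filterlim (\<lambda>k. real (m k)) at_top sequentially"
    using filterlim_compose[OF filterlim_real_sequentially assms(2)] by simp
  then have "(\<lambda>k. 1 / real (m k)) \<longlonglongrightarrow> 0"
    by (intro tendsto_divide_0[OF tendsto_const] filterlim_at_top_imp_at_infinity)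
  then have "(\<lambda>k. beta * alpha / (alpha - 1 / real (m k))) \<longlonglongrightarrow> beta * alpha / (alpha - 0)"
    using assms(1) by (intro tendsto_intros) auto
  moreover have "eventually (\<lambda>k. m k > 0) sequentially"
    using filterlim_at_top[THEN iffD1, OF assms(2), rule_format, of 1]
    by (auto elim: eventually_mono)
  then have "eventually (\<lambda>k. beta * alpha / (alpha - 1 / real (m k)) =
      mean_job_time beta alpha (m k)) sequentially"
    by (auto elim: eventually_mono simp: mean_job_time_eq_inverse_form)
  ultimately show ?thesis
    using assms(1) by (simp add: tendsto_cong)
qed

lemma erlang_B_nonneg: "a \<ge> 0 \<Longrightarrow> erlang_B c a \<ge> 0"
  unfolding erlang_B_def by (intro divide_nonneg_nonneg sum_nonneg) auto

lemma erlang_B_le_numerator: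
  assumes "a \<ge> 0"
  shows "erlang_B c a \<le> a ^ c / fact c"
proof -
  have "(\<Sum>j\<in>{0}. a ^ j / fact j) \<le> (\<Sum>j = 0..c. a ^ j / fact j)"
    using assms by (intro sum_mono2) auto
  then have "1 \<le> (\<Sum>j = 0..c. a ^ j / fact j)"
    by simp
  then have "erlang_B c a \<le> (a ^ c / fact c) / 1"
    unfolding erlang_B_def using assms by (intro divide_left_mono) auto
  then show ?thesis
    by simp
qed

lemma erlang_B_tendsto_zero:
  assumes "\<And>k. 0 \<le> a k" and "\<And>k. a k \<le> A"
    and "filterlim c at_top sequentially"
  shows "(\<lambda>k. erlang_B (c k) (a k)) \<longlonglongrightarrow> 0"
proof (rule tendsto_sandwich[where f = "\<lambda>_. 0" and h = "\<lambda>k. A ^ c k / fact (c k)"])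
  have "(\<lambda>n. inverse (fact n) * A ^ n) \<longlonglongrightarrow> 0"
    by (rule summable_LIMSEQ_zero[OF summable_exp])
  then have "(\<lambda>n. A ^ n / fact n) \<longlonglongrightarrow> 0"
    by (simp add: field_simps)
  then show "(\<lambda>k. A ^ c k / fact (c k)) \<longlonglongrightarrow> 0"
    using filterlim_compose[OF _ assms(3)] by blast
  have "erlang_B (c k) (a k) \<le> A ^ c k / fact (c k)" for k
    using erlang_B_le_numerator[OF assms(1)] assms(1,2)
    by (meson divide_right_mono fact_ge_zero order_trans power_mono)
  then show "eventually (\<lambda>k. erlang_B (c k) (a k) \<le> A ^ c k / fact (c k)) sequentially"
    by simp
qed (use erlang_B_nonneg[OF assms(1)] in auto)

theorem lemma3:
  fixes lam beta alpha Tcl :: real and N m c :: "nat \<Rightarrow> nat"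
  assumes "lam > 0" and "beta > 0" and "alpha > 1" and "Tcl > 0"
    and "\<And>k. N k > 0" and "\<And>k. m k > 0" and "\<And>k. c k > 0"
    and "\<And>k. m k * c k = N k"
    and "filterlim N at_top sequentially"
    and "filterlim m at_top sequentially"
    and "filterlim c at_top sequentially"
  shows "(\<lambda>k. avg_sys_time lam beta alpha Tcl (m k) (c k)) \<longlonglongrightarrow> beta"
proof -
  let ?P = "\<lambda>k. erlang_B (c k) (offered_load lam beta alpha (m k))"
  have "offered_load lam beta alpha (m k) \<ge> 0" for k
    unfolding offered_load_eq using assms(1-3,6) mean_job_time_nonneg by simp
  moreover have "offered_load lam beta alpha (m k) \<le> lam * (beta * alpha / (alpha - 1))" for k
    unfolding offered_load_eq using assms(1-3,6) mean_job_time_le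
    by (intro mult_left_mono) auto
  ultimately have "?P \<longlonglongrightarrow> 0"
    by (rule erlang_B_tendsto_zero[OF _ _ assms(11)])
  moreover have "(\<lambda>k. mean_job_time beta alpha (m k)) \<longlonglongrightarrow> beta"
    using assms(3,10) by (intro tendsto_mean_job_time) auto
  ultimately have "(\<lambda>k. mean_job_time beta alpha (m k) * (1 - ?P k) + Tcl * ?P k)
      \<longlonglongrightarrow> beta * (1 - 0) + Tcl * 0"
    by (intro tendsto_intros)
  then show ?thesis
    unfolding avg_sys_time_eq by simp
qed

end
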